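(* Let $k \geq 1$, let $r > 0$, $\gamma' \geq 0$, $\gamma \geq 12 k$, let $T \in \mathbb{N}$, and let $K_1, \dots, K_T$ be convex subsets of $\mathbb{R}^d$. Let $V \subset \mathbb{R}^d$ be a linear subspace of dimension $d-k$. Consider the cylinder $C = \{y \in \mathbb{R}^d : \|P_V y\| \leq \gamma' r\}$ and let \[ \tilde{\Omega} = \Big\{ y \in C \;:\; \exists (y_t)_{t \in \{1,\dots,T\}} \text{ with } y_T = y,\ y_t \in K_t \cap C \text{ for all } t, \text{ and } \sum_{t=1}^{T-1} \|y_t - y_{t+1}\| \leq r \Big\}. \] Assume that $\mathbb{S} := \{\theta \in V^{\perp} : \|\theta\| = \gamma r\} \subset P_{V^{\perp}} \tilde{\Omega}$. Then there exists a sequence $(Y_t)_{t \in \{1,\dots,T\}}$ with $Y_t \in K_t \cap V$ for all $t$ and \[ \sum_{t=1}^{T-1} \|Y_t - Y_{t+1}\| \leq \left(1 + \frac{2 + 4\gamma'}{\gamma}\, k\right) r. \]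
   Context: $\|\cdot\|$ is the Euclidean norm on $\mathbb{R}^d$, $V^{\perp}$ is the orthogonal complement of $V$, and $P_W$ denotes the orthogonal projection onto a subspace $W$. *)

theory Defs
  imports "HOL-Analysis.Analysis"
begin

definition orth_proj :: "'a::euclidean_space set \<Rightarrow> 'a \<Rightarrow> 'a" where
  "orth_proj W y = (THE p. p \<in> W \<and> y - p \<in> orthogonal_comp W)"

end

theory Submission
  imports Defs
begin

text \<open>
  Fix an orthonormal basis B of the orthogonal complement W of V, so |B| = k. By hypothesis each
  pole \<plusminus>\<gamma>r e (e \<in> B) of the sphere is the W-projection of the endpoint of a path of length at
  most r inside the cylinder; projections are 1-Lipschitz, so the W-projection of the whole path
  stays within r of its pole. At each time t, average the 2k current points with the weights
  (1/2 \<plusminus> n(t) \<bullet> e)/k. The W-component of this tilted mean is affine in the tilt n(t), with linear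
  part within 2kr of 2\<gamma>r times the identity. Hence some tilt with |n(t)| \<le> k/\<gamma> \<le> 1/2 puts the
  mean into V, where it lies in K(t) by convexity, and comparing the equations at t and t+1 gives
  \<gamma>r |n(t) - n(t+1)| \<le> D(t), the total movement of the 2k paths from t to t+1. The V-components
  of the paths are bounded by \<gamma>'r, so the averaged path moves by at most
  (1/(2k) + (1 + 2\<gamma>')/\<gamma>) D(t), and the D(t) sum to at most 2kr.
\<close>

section \<open>Orthogonal projections\<close>

lemma orth_proj_decomp_unique:
  fixes W :: "'a::euclidean_space set"
  assumes "subspace W"
  shows "\<exists>!p. p \<in> W \<and> y - p \<in> W\<^sup>\<bottom>"
proof (rule ex_ex1I)
  have "y \<in> W + W\<^sup>\<bottom>"
    using subspace_sum_orthogonal_comp[OF assms] by simp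
  then obtain p q where "y = p + q" "p \<in> W" "q \<in> W\<^sup>\<bottom>"
    by (rule set_plus_elim)
  then show "\<exists>p. p \<in> W \<and> y - p \<in> W\<^sup>\<bottom>" by (intro exI[of _ p]) simp
next
  fix p q assume p: "p \<in> W \<and> y - p \<in> W\<^sup>\<bottom>" and q: "q \<in> W \<and> y - q \<in> W\<^sup>\<bottom>"
  have "p - q \<in> W" using p q assms by (simp add: subspace_diff)
  moreover have "(y - q) - (y - p) \<in> W\<^sup>\<bottom>"
    using p q by (blast intro: subspace_diff[OF subspace_orthogonal_comp])
  ultimately have "p - q \<in> W \<inter> W\<^sup>\<bottom>" by simp
  then show "p = q" using orthogonal_Int_0[OF assms] by auto
qed

lemma orth_proj_in:
  assumes "subspace W"
  shows "orth_proj W y \<in> W"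
  using theI'[OF orth_proj_decomp_unique[OF assms]] unfolding orth_proj_def by blast

lemma orth_proj_residual_in:
  assumes "subspace W"
  shows "y - orth_proj W y \<in> W\<^sup>\<bottom>"
  using theI'[OF orth_proj_decomp_unique[OF assms]] unfolding orth_proj_def by blast

lemma orth_proj_eq:
  assumes "subspace W" "p \<in> W" "y - p \<in> W\<^sup>\<bottom>"
  shows "orth_proj W y = p"
  unfolding orth_proj_def using assms by (intro the1_equality orth_proj_decomp_unique) auto

lemma orth_proj_id:
  assumes "subspace W" "x \<in> W"
  shows "orth_proj W x = x"
  using assms by (intro orth_proj_eq) (simp_all add: subspace_0 subspace_orthogonal_comp)

lemma orth_proj_orthogonal_comp:
  assumes "subspace W"
  shows "orth_proj (W\<^sup>\<bottom>) y = y - orth_proj W y"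
proof (rule orth_proj_eq[OF subspace_orthogonal_comp])
  show "y - orth_proj W y \<in> W\<^sup>\<bottom>" by (rule orth_proj_residual_in[OF assms])
  show "y - (y - orth_proj W y) \<in> W\<^sup>\<bottom>\<^sup>\<bottom>"
    using orth_proj_in[OF assms] by (simp add: orthogonal_comp_self[OF assms])
qed

lemma orth_proj_orthogonal_comp_eq_0_iff:
  assumes "subspace W"
  shows "orth_proj (W\<^sup>\<bottom>) y = 0 \<longleftrightarrow> y \<in> W"
  using orth_proj_id[OF assms] orth_proj_in[OF assms] orth_proj_orthogonal_comp[OF assms]
  by (metis eq_iff_diff_eq_0)

lemma linear_orth_proj:
  assumes "subspace W"
  shows "linear (orth_proj W)"
proof
  fix x y
  show "orth_proj W (x + y) = orth_proj W x + orth_proj W y"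
  proof (rule orth_proj_eq[OF assms])
    show "orth_proj W x + orth_proj W y \<in> W"
      by (intro subspace_add[OF assms] orth_proj_in[OF assms])
    have "x + y - (orth_proj W x + orth_proj W y) = (x - orth_proj W x) + (y - orth_proj W y)"
      by simp
    also have "\<dots> \<in> W\<^sup>\<bottom>"
      by (intro subspace_add[OF subspace_orthogonal_comp] orth_proj_residual_in[OF assms])
    finally show "x + y - (orth_proj W x + orth_proj W y) \<in> W\<^sup>\<bottom>" .
  qed
next
  fix c :: real and x
  show "orth_proj W (c *\<^sub>R x) = c *\<^sub>R orth_proj W x"
  proof (rule orth_proj_eq[OF assms])
    show "c *\<^sub>R orth_proj W x \<in> W"
      by (intro subspace_scale[OF assms] orth_proj_in[OF assms])
    have "c *\<^sub>R x - c *\<^sub>R orth_proj W x = c *\<^sub>R (x - orth_proj W x)"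
      by (simp add: algebra_simps)
    also have "\<dots> \<in> W\<^sup>\<bottom>"
      by (intro subspace_scale[OF subspace_orthogonal_comp] orth_proj_residual_in[OF assms])
    finally show "c *\<^sub>R x - c *\<^sub>R orth_proj W x \<in> W\<^sup>\<bottom>" .
  qed
qed

lemma norm_orth_proj_le:
  assumes "subspace W"
  shows "norm (orth_proj W y) \<le> norm y"
proof -
  let ?p = "orth_proj W y"
  have "orthogonal ?p (y - ?p)"
    using orth_proj_in[OF assms] orth_proj_residual_in[OF assms] by (auto simp: orthogonal_comp_def)
  then have "norm y ^ 2 = norm ?p ^ 2 + norm (y - ?p) ^ 2"
    using norm_add_Pythagorean[of ?p "y - ?p"] by simp
  then show ?thesis
    by (metis abs_norm_cancel le_add_same_cancel1 real_le_rsqrt zero_le_power2 real_sqrt_abs)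
qed

lemma norm_orth_proj_diff_le:
  assumes "subspace W"
  shows "norm (orth_proj W x - orth_proj W y) \<le> norm (x - y)"
  using norm_orth_proj_le[OF assms, of "x - y"] linear_diff[OF linear_orth_proj[OF assms]] by simp

lemma dim_orthogonal_comp:
  fixes V :: "'a::euclidean_space set"
  assumes "subspace V"
  shows "dim (V\<^sup>\<bottom>) + dim V = DIM('a)"
proof -
  have "{y \<in> UNIV. \<forall>x\<in>V. orthogonal x y} = V\<^sup>\<bottom>"
    unfolding orthogonal_comp_def by auto
  then show ?thesis
    using dim_subspace_orthogonal_to_vectors[OF assms subspace_UNIV] by simp
qed

lemma orthonormal_span_expansion:
  fixes B :: "'a::euclidean_space set"
  assumes "finite B" "pairwise orthogonal B" "\<And>e. e \<in> B \<Longrightarrow> norm e = 1" "x \<in> span B"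
  shows "(\<Sum>e\<in>B. (x \<bullet> e) *\<^sub>R e) = x"
proof -
  let ?u = "x - (\<Sum>e\<in>B. (x \<bullet> e) *\<^sub>R e)"
  have inner_basis: "\<forall>b\<in>B. \<forall>e\<in>B. b \<bullet> e = (if b = e then 1 else 0)"
    using assms(2,3) norm_eq_1 by (auto simp: orthogonal_def pairwise_def)
  have "b \<bullet> ?u = 0" if "b \<in> B" for b
  proof -
    have "b \<bullet> (\<Sum>e\<in>B. (x \<bullet> e) *\<^sub>R e) = (\<Sum>e\<in>B. (x \<bullet> e) * (b \<bullet> e))"
      by (simp add: inner_sum_right)
    also have "\<dots> = (\<Sum>e\<in>B. if e = b then x \<bullet> b else 0)"
      by (rule sum.cong) (use inner_basis that in auto)
    finally show ?thesis using that assms(1) by (simp add: inner_diff_right inner_commute)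
  qed
  then have "\<forall>w\<in>span B. w \<bullet> ?u = 0"
    by (metis (no_types, lifting) inner_commute orthogonal_def orthogonal_to_span)
  moreover have "?u \<in> span B"
    using assms(4) by (simp add: span_diff span_sum span_mul span_base)
  ultimately have "?u \<bullet> ?u = 0" by blast
  then show ?thesis by simp
qed

lemma norm_sum_inner_scaleR_le:
  fixes B :: "'a::real_inner set" and h :: "'a \<Rightarrow> 'b::real_normed_vector"
  assumes "\<And>e. e \<in> B \<Longrightarrow> norm e = 1"
  shows "norm (\<Sum>e\<in>B. (x \<bullet> e) *\<^sub>R h e) \<le> norm x * (\<Sum>e\<in>B. norm (h e))"
proof -
  have "norm (\<Sum>e\<in>B. (x \<bullet> e) *\<^sub>R h e) \<le> (\<Sum>e\<in>B. \<bar>x \<bullet> e\<bar> * norm (h e))"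
    by (rule norm_sum[THEN order_trans]) simp
  also have "\<dots> \<le> (\<Sum>e\<in>B. norm x * norm (h e))"
  proof (intro sum_mono mult_right_mono)
    show "\<bar>x \<bullet> e\<bar> \<le> norm x" if "e \<in> B" for e
      using Cauchy_Schwarz_ineq2[of x e] assms[OF that] by simp
  qed simp
  finally show ?thesis by (simp add: sum_distrib_left)
qed

section \<open>Length of a discrete path\<close>

definition path_length :: "nat \<Rightarrow> (nat \<Rightarrow> 'a::real_normed_vector) \<Rightarrow> real" where
  "path_length T ys = (\<Sum>t=1..T-1. norm (ys t - ys (t+1)))"

lemma norm_diff_le_path_length:
  assumes "t \<in> {1..T}"
  shows "norm (ys t - ys T) \<le> path_length T ys"
proof -
  have "t \<le> T" "1 \<le> t" using assms by auto
  have "ys t - ys T = (\<Sum>u=t..<T. ys u - ys (Suc u))"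
    using sum_Suc_diff'[OF \<open>t \<le> T\<close>, of "\<lambda>u. - ys u"] by simp
  then have "norm (ys t - ys T) \<le> (\<Sum>u=t..<T. norm (ys u - ys (u+1)))"
    by (simp add: norm_sum)
  also have "\<dots> \<le> path_length T ys"
    unfolding path_length_def using \<open>1 \<le> t\<close> by (intro sum_mono2) auto
  finally show ?thesis .
qed

lemma path_length_le_of_dominated_steps:
  fixes Y :: "nat \<Rightarrow> 'a::real_normed_vector" and pp pm :: "nat \<Rightarrow> 'b \<Rightarrow> 'c::real_normed_vector"
    and c r :: real
  assumes "\<And>t. t \<in> {1..T-1} \<Longrightarrow>
      norm (Y t - Y (t+1)) \<le> c * (\<Sum>e\<in>B. norm (pp t e - pp (t+1) e) + norm (pm t e - pm (t+1) e))"
    and "0 \<le> c"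
    and "\<And>e. e \<in> B \<Longrightarrow> path_length T (\<lambda>t. pp t e) \<le> r \<and> path_length T (\<lambda>t. pm t e) \<le> r"
  shows "path_length T Y \<le> c * (2 * real (card B) * r)"
proof -
  have "path_length T Y
      \<le> (\<Sum>t=1..T-1. c * (\<Sum>e\<in>B. norm (pp t e - pp (t+1) e) + norm (pm t e - pm (t+1) e)))"
    unfolding path_length_def using assms(1) by (rule sum_mono)
  also have "\<dots> = c * (\<Sum>t=1..T-1. \<Sum>e\<in>B. norm (pp t e - pp (t+1) e) + norm (pm t e - pm (t+1) e))"
    by (rule sum_distrib_left[symmetric])
  also have "(\<Sum>t=1..T-1. \<Sum>e\<in>B. norm (pp t e - pp (t+1) e) + norm (pm t e - pm (t+1) e))
      = (\<Sum>e\<in>B. path_length T (\<lambda>t. pp t e) + path_length T (\<lambda>t. pm t e))"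
    unfolding path_length_def by (simp only: sum.distrib sum.swap[where A = "{1..T-1}"])
  also have "\<dots> \<le> (\<Sum>e\<in>B. 2 * r)"
  proof (rule sum_mono)
    fix e assume "e \<in> B"
    then show "path_length T (\<lambda>t. pp t e) + path_length T (\<lambda>t. pm t e) \<le> 2 * r"
      using assms(3)[of e] by linarith
  qed
  finally show ?thesis using assms(2) by (simp add: mult_left_mono)
qed

lemma norm_orth_proj_diff_le_path_length:
  assumes "subspace W" "t \<in> {1..T}"
  shows "norm (orth_proj W (ys t) - orth_proj W (ys T)) \<le> path_length T ys"
  using norm_orth_proj_diff_le[OF assms(1)] norm_diff_le_path_length[OF assms(2)] by (rule order_trans)

section \<open>Linear maps close to a multiple of the identity\<close>

lemma norm_ge_of_near_scalar:
  fixes L :: "'a::real_normed_vector \<Rightarrow> 'a"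
  assumes "norm (L x - a *\<^sub>R x) \<le> \<delta> * norm x" "0 \<le> a"
  shows "(a - \<delta>) * norm x \<le> norm (L x)"
proof -
  have "a * norm x \<le> norm (L x) + norm (a *\<^sub>R x - L x)"
    using norm_triangle_sub[of "a *\<^sub>R x" "L x"] assms(2) by simp
  then show ?thesis using assms(1) by (simp add: norm_minus_commute algebra_simps)
qed

text \<open>Banach's fixed point theorem for the contraction x \<mapsto> x - (L x - c) / a of W.\<close>
lemma near_scalar_solvable:
  fixes L :: "'a::euclidean_space \<Rightarrow> 'a"
  assumes "subspace W" "linear L" "L ` W \<subseteq> W"
    and near: "\<And>x. x \<in> W \<Longrightarrow> norm (L x - a *\<^sub>R x) \<le> \<delta> * norm x"
    and "0 \<le> \<delta>" "\<delta> < a" "c \<in> W"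
  shows "\<exists>x\<in>W. L x = c"
proof -
  define F where "F x = x - (1/a) *\<^sub>R (L x - c)" for x
  have "\<exists>!x\<in>W. F x = x"
  proof (rule Banach_fix)
    show "complete W" using assms(1) closed_subspace complete_eq_closed by blast
    show "W \<noteq> {}" using subspace_0[OF assms(1)] by blast
    show "0 \<le> \<delta> / a" "\<delta> / a < 1" using assms(5,6) by simp_all
    show "F ` W \<subseteq> W"
    proof (rule image_subsetI)
      fix x assume "x \<in> W"
      then have "L x \<in> W" using assms(3) by blast
      then show "F x \<in> W" unfolding F_def
        using \<open>x \<in> W\<close> assms(7) by (intro subspace_diff[OF assms(1)] subspace_scale[OF assms(1)])
    qed
    fix x y assume "x \<in> W" "y \<in> W"
    have "F x - F y = - (1/a) *\<^sub>R (L (x - y) - a *\<^sub>R (x - y))"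
      using assms(5,6) by (simp add: F_def linear_diff[OF assms(2)] algebra_simps)
    then have "dist (F x) (F y) = norm (L (x - y) - a *\<^sub>R (x - y)) / a"
      using assms(5,6) by (simp add: dist_norm)
    also have "\<dots> \<le> \<delta> * norm (x - y) / a"
      using near subspace_diff[OF assms(1) \<open>x \<in> W\<close> \<open>y \<in> W\<close>] assms(5,6)
      by (intro divide_right_mono) auto
    finally show "dist (F x) (F y) \<le> \<delta> / a * dist x y"
      by (simp add: dist_norm)
  qed
  then obtain x where "x \<in> W" "F x = x" by blast
  then show ?thesis using assms(5,6) by (intro bexI[of _ x]) (simp_all add: F_def)
qed

section \<open>Tilted means\<close>

definition tilt_map :: "'a::real_inner set \<Rightarrow> ('a \<Rightarrow> 'b::real_vector) \<Rightarrow> ('a \<Rightarrow> 'b) \<Rightarrow> 'a \<Rightarrow> 'b" where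
  "tilt_map B yp ym n = (\<Sum>e\<in>B. (n \<bullet> e) *\<^sub>R (yp e - ym e))"

definition tilted_mean :: "'a::real_inner set \<Rightarrow> 'a \<Rightarrow> ('a \<Rightarrow> 'b::real_vector) \<Rightarrow> ('a \<Rightarrow> 'b) \<Rightarrow> 'b" where
  "tilted_mean B n xp xm =
     (1 / card B) *\<^sub>R (\<Sum>e\<in>B. (1/2 + n \<bullet> e) *\<^sub>R xp e + (1/2 - n \<bullet> e) *\<^sub>R xm e)"

lemma linear_tilt_map: "linear (tilt_map B yp ym)"
  by (rule linearI)
    (simp_all add: tilt_map_def inner_add_left scaleR_add_left sum.distrib scaleR_sum_right)

lemma tilted_mean_eq_tilt_map:
  fixes xp xm :: "'a::real_inner \<Rightarrow> 'b::real_vector"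
  shows "tilted_mean B n xp xm = (1 / card B) *\<^sub>R (tilt_map B xp xm n + (\<Sum>e\<in>B. midpoint (xp e) (xm e)))"
proof -
  have mix: "(1/2 + a) *\<^sub>R x + (1/2 - a) *\<^sub>R y = a *\<^sub>R (x - y) + midpoint x y"
    for a :: real and x y :: 'b
    by (simp add: midpoint_def algebra_simps)
  have "(\<Sum>e\<in>B. (1/2 + n \<bullet> e) *\<^sub>R xp e + (1/2 - n \<bullet> e) *\<^sub>R xm e)
      = tilt_map B xp xm n + (\<Sum>e\<in>B. midpoint (xp e) (xm e))"
    unfolding tilt_map_def sum.distrib[symmetric] by (intro sum.cong) (simp_all only: mix)
  then show ?thesis by (simp add: tilted_mean_def)
qed

lemma linear_image_tilted_mean:
  assumes "linear f"
  shows "f (tilted_mean B n xp xm) = tilted_mean B n (f \<circ> xp) (f \<circ> xm)"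
  by (simp add: tilted_mean_def linear_scale[OF assms] linear_sum[OF assms] linear_add[OF assms])

lemma tilted_mean_in_convex:
  assumes "convex K" "finite B" "B \<noteq> {}"
    and "\<And>e. e \<in> B \<Longrightarrow> xp e \<in> K" "\<And>e. e \<in> B \<Longrightarrow> xm e \<in> K"
    and "\<And>e. e \<in> B \<Longrightarrow> \<bar>n \<bullet> e\<bar> \<le> 1/2"
  shows "tilted_mean B n xp xm \<in> K"
  unfolding tilted_mean_def scaleR_sum_right
proof (rule convex_sum[OF assms(2,1)])
  show "(\<Sum>e\<in>B. 1 / real (card B)) = 1" using assms(2,3) by simp
  fix e assume "e \<in> B"
  have "0 \<le> 1/2 + n \<bullet> e" "0 \<le> 1/2 - n \<bullet> e"
    using assms(6)[OF \<open>e \<in> B\<close>] by (simp_all add: abs_le_iff)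
  then show "(1/2 + n \<bullet> e) *\<^sub>R xp e + (1/2 - n \<bullet> e) *\<^sub>R xm e \<in> K"
    using assms(4,5) \<open>e \<in> B\<close> by (intro convexD[OF assms(1)]) auto
qed simp

lemma norm_tilted_mean_diff_le:
  fixes B :: "'a::real_inner set" and xp xm xp' xm' :: "'a \<Rightarrow> 'b::real_normed_vector"
  assumes "finite B" "B \<noteq> {}" "\<And>e. e \<in> B \<Longrightarrow> norm e = 1"
    and "\<And>e. e \<in> B \<Longrightarrow> norm (xp e - xp' e) \<le> dp e"
    and "\<And>e. e \<in> B \<Longrightarrow> norm (xm e - xm' e) \<le> dm e"
    and "\<And>e. e \<in> B \<Longrightarrow> norm (xp' e - xm' e) \<le> R"
  shows "norm (tilted_mean B n xp xm - tilted_mean B n' xp' xm')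
    \<le> (1/2 + norm n) / card B * (\<Sum>e\<in>B. dp e + dm e) + R * norm (n - n')"
proof -
  let ?k = "real (card B)"
  define z where "z e = (1/2 + n \<bullet> e) *\<^sub>R (xp e - xp' e) + (1/2 - n \<bullet> e) *\<^sub>R (xm e - xm' e)
    + ((n - n') \<bullet> e) *\<^sub>R (xp' e - xm' e)" for e
  have k_pos: "?k > 0" using assms(1,2) by (simp add: card_gt_0_iff)
  have "tilted_mean B n xp xm - tilted_mean B n' xp' xm' = (1 / ?k) *\<^sub>R (\<Sum>e\<in>B. z e)"
    unfolding tilted_mean_def scaleR_diff_right[symmetric] sum_subtractf[symmetric] z_def
    by (intro arg_cong[where f = "scaleR _"] sum.cong) (simp_all add: inner_diff_left algebra_simps)
  also have "norm \<dots> \<le> (1 / ?k) * (\<Sum>e\<in>B. (1/2 + norm n) * (dp e + dm e) + R * norm (n - n'))"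
  proof -
    have "norm (z e) \<le> (1/2 + norm n) * (dp e + dm e) + R * norm (n - n')" if "e \<in> B" for e
    proof -
      have "\<bar>n \<bullet> e\<bar> \<le> norm n" "\<bar>(n - n') \<bullet> e\<bar> \<le> norm (n - n')"
        using Cauchy_Schwarz_ineq2[of n e] Cauchy_Schwarz_ineq2[of "n - n'" e] assms(3)[OF that]
        by simp_all
      then have "\<bar>1/2 + n \<bullet> e\<bar> \<le> 1/2 + norm n" "\<bar>1/2 - n \<bullet> e\<bar> \<le> 1/2 + norm n"
        by linarith+
      have "norm (z e) \<le> norm ((1/2 + n \<bullet> e) *\<^sub>R (xp e - xp' e)) + norm ((1/2 - n \<bullet> e) *\<^sub>R (xm e - xm' e))
          + norm (((n - n') \<bullet> e) *\<^sub>R (xp' e - xm' e))"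
        unfolding z_def by (intro norm_triangle_le add_right_mono norm_triangle_ineq)
      also have "\<dots> \<le> (1/2 + norm n) * dp e + (1/2 + norm n) * dm e + norm (n - n') * R"
        unfolding norm_scaleR using assms(4-6)[OF that] \<open>\<bar>(n - n') \<bullet> e\<bar> \<le> norm (n - n')\<close>
          \<open>\<bar>1/2 + n \<bullet> e\<bar> \<le> 1/2 + norm n\<close> \<open>\<bar>1/2 - n \<bullet> e\<bar> \<le> 1/2 + norm n\<close>
        by (intro add_mono mult_mono) auto
      finally show ?thesis by (simp add: algebra_simps add_divide_distrib)
    qed
    then have "norm (\<Sum>e\<in>B. z e) \<le> (\<Sum>e\<in>B. (1/2 + norm n) * (dp e + dm e) + R * norm (n - n'))"
      by (intro norm_sum[THEN order_trans] sum_mono)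
    then show ?thesis using k_pos by (simp add: divide_right_mono)
  qed
  also have "\<dots> = (1/2 + norm n) / ?k * (\<Sum>e\<in>B. dp e + dm e) + R * norm (n - n')"
    using k_pos by (simp add: sum.distrib distrib_left flip: sum_distrib_left)
  finally show ?thesis .
qed

lemma norm_midpoint_le: "norm (midpoint a b) \<le> (norm a + norm b) / 2"
  using norm_triangle_ineq[of a b] by (simp add: midpoint_def)

lemma norm_sum_midpoint_diff_le:
  fixes yp ym yp' ym' :: "'a \<Rightarrow> 'b::real_normed_vector"
  assumes "\<And>e. e \<in> B \<Longrightarrow> norm (yp e - yp' e) \<le> dp e"
    and "\<And>e. e \<in> B \<Longrightarrow> norm (ym e - ym' e) \<le> dm e"
  shows "norm ((\<Sum>e\<in>B. midpoint (yp e) (ym e)) - (\<Sum>e\<in>B. midpoint (yp' e) (ym' e)))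
    \<le> (\<Sum>e\<in>B. dp e + dm e) / 2"
proof -
  have "(\<Sum>e\<in>B. midpoint (yp e) (ym e)) - (\<Sum>e\<in>B. midpoint (yp' e) (ym' e))
      = (\<Sum>e\<in>B. midpoint (yp e - yp' e) (ym e - ym' e))"
    unfolding sum_subtractf[symmetric] by (intro sum.cong) (simp_all add: midpoint_def algebra_simps)
  also have "norm \<dots> \<le> (\<Sum>e\<in>B. (dp e + dm e) / 2)"
  proof (intro norm_sum[THEN order_trans] sum_mono)
    fix e assume "e \<in> B"
    have "norm (midpoint (yp e - yp' e) (ym e - ym' e)) \<le> (norm (yp e - yp' e) + norm (ym e - ym' e)) / 2"
      by (rule norm_midpoint_le)
    also have "\<dots> \<le> (dp e + dm e) / 2"
      using assms[OF \<open>e \<in> B\<close>] by (intro divide_right_mono add_mono) auto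
    finally show "norm (midpoint (yp e - yp' e) (ym e - ym' e)) \<le> (dp e + dm e) / 2" .
  qed
  finally show ?thesis by (simp add: sum_divide_distrib)
qed

lemma norm_tilt_map_diff_le:
  fixes B :: "'a::real_inner set" and yp ym yp' ym' :: "'a \<Rightarrow> 'b::real_normed_vector"
  assumes "\<And>e. e \<in> B \<Longrightarrow> norm e = 1"
    and "\<And>e. e \<in> B \<Longrightarrow> norm (yp e - yp' e) \<le> dp e"
    and "\<And>e. e \<in> B \<Longrightarrow> norm (ym e - ym' e) \<le> dm e"
  shows "norm (tilt_map B yp ym n - tilt_map B yp' ym' n) \<le> norm n * (\<Sum>e\<in>B. dp e + dm e)"
proof -
  have "tilt_map B yp ym n - tilt_map B yp' ym' n = (\<Sum>e\<in>B. (n \<bullet> e) *\<^sub>R ((yp e - yp' e) - (ym e - ym' e)))"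
    unfolding tilt_map_def sum_subtractf[symmetric] by (intro sum.cong) (simp_all add: algebra_simps)
  also have "norm \<dots> \<le> norm n * (\<Sum>e\<in>B. norm ((yp e - yp' e) - (ym e - ym' e)))"
    by (rule norm_sum_inner_scaleR_le[OF assms(1)])
  also have "\<dots> \<le> norm n * (\<Sum>e\<in>B. dp e + dm e)"
  proof (intro mult_left_mono sum_mono)
    fix e assume "e \<in> B"
    show "norm ((yp e - yp' e) - (ym e - ym' e)) \<le> dp e + dm e"
      using norm_triangle_ineq4[of "yp e - yp' e" "ym e - ym' e"] assms(2,3)[OF \<open>e \<in> B\<close>] by linarith
  qed simp
  finally show ?thesis .
qed

section \<open>Tilting towards an orthonormal basis of the complement\<close>

locale orthonormal_complement_basis =
  fixes V B :: "'a::euclidean_space set"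
  assumes subspace_V: "subspace V"
    and finite_B: "finite B" and B_nonempty: "B \<noteq> {}"
    and orthogonal_B: "pairwise orthogonal B"
    and unit_B: "\<And>e. e \<in> B \<Longrightarrow> norm e = 1"
    and span_B: "span B = V\<^sup>\<bottom>"
begin

abbreviation P :: "'a \<Rightarrow> 'a" where "P \<equiv> orth_proj V"
abbreviation Q :: "'a \<Rightarrow> 'a" where "Q \<equiv> orth_proj (V\<^sup>\<bottom>)"

lemma card_B_pos: "real (card B) > 0"
  using finite_B B_nonempty by (simp add: card_gt_0_iff)

lemma tilt_map_poles:
  assumes "n \<in> V\<^sup>\<bottom>"
  shows "tilt_map B (\<lambda>e. \<rho> *\<^sub>R e) (\<lambda>e. - (\<rho> *\<^sub>R e)) n = (2 * \<rho>) *\<^sub>R n"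
proof -
  have "tilt_map B (\<lambda>e. \<rho> *\<^sub>R e) (\<lambda>e. - (\<rho> *\<^sub>R e)) n = (2 * \<rho>) *\<^sub>R (\<Sum>e\<in>B. (n \<bullet> e) *\<^sub>R e)"
    by (simp add: tilt_map_def scaleR_sum_right mult.commute flip: scaleR_2)
  also have "(\<Sum>e\<in>B. (n \<bullet> e) *\<^sub>R e) = n"
    using orthonormal_span_expansion[OF finite_B orthogonal_B unit_B] assms span_B by simp
  finally show ?thesis .
qed

lemma norm_tilt_map_sub_scaleR_le:
  fixes yp ym :: "'a \<Rightarrow> 'a" and \<rho> r :: real
  assumes "\<And>e. e \<in> B \<Longrightarrow> norm (yp e - \<rho> *\<^sub>R e) \<le> r"
    and "\<And>e. e \<in> B \<Longrightarrow> norm (ym e + \<rho> *\<^sub>R e) \<le> r"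
    and "n \<in> V\<^sup>\<bottom>"
  shows "norm (tilt_map B yp ym n - (2 * \<rho>) *\<^sub>R n) \<le> 2 * real (card B) * r * norm n"
  using norm_tilt_map_diff_le[where yp' = "\<lambda>e. \<rho> *\<^sub>R e" and ym' = "\<lambda>e. - (\<rho> *\<^sub>R e)"
      and dp = "\<lambda>_. r" and dm = "\<lambda>_. r" and yp = yp and ym = ym and n = n and B = B, OF unit_B]
    assms by (simp add: tilt_map_poles algebra_simps)

lemma norm_sum_midpoint_le:
  fixes yp ym :: "'a \<Rightarrow> 'a" and \<rho> r :: real
  assumes "\<And>e. e \<in> B \<Longrightarrow> norm (yp e - \<rho> *\<^sub>R e) \<le> r"
    and "\<And>e. e \<in> B \<Longrightarrow> norm (ym e + \<rho> *\<^sub>R e) \<le> r"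
  shows "norm (\<Sum>e\<in>B. midpoint (yp e) (ym e)) \<le> real (card B) * r"
  using norm_sum_midpoint_diff_le[where yp' = "\<lambda>e. \<rho> *\<^sub>R e" and ym' = "\<lambda>e. - (\<rho> *\<^sub>R e)"
      and dp = "\<lambda>_. r" and dm = "\<lambda>_. r" and yp = yp and ym = ym and B = B]
    assms by (simp add: midpoint_def)

lemma tilted_mean_in_subspace_iff:
  "tilted_mean B n xp xm \<in> V \<longleftrightarrow>
     tilt_map B (Q \<circ> xp) (Q \<circ> xm) n + (\<Sum>e\<in>B. midpoint (Q (xp e)) (Q (xm e))) = 0"
proof -
  have "tilted_mean B n xp xm \<in> V \<longleftrightarrow> Q (tilted_mean B n xp xm) = 0"
    by (rule orth_proj_orthogonal_comp_eq_0_iff[OF subspace_V, symmetric])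
  also have "Q (tilted_mean B n xp xm) = tilted_mean B n (Q \<circ> xp) (Q \<circ> xm)"
    by (rule linear_image_tilted_mean[OF linear_orth_proj[OF subspace_orthogonal_comp]])
  finally show ?thesis
    using card_B_pos by (simp add: tilted_mean_eq_tilt_map)
qed

lemma tilt_map_orth_proj_in:
  "tilt_map B (Q \<circ> xp) (Q \<circ> xm) n \<in> V\<^sup>\<bottom>"
  unfolding tilt_map_def using orth_proj_in[OF subspace_orthogonal_comp]
  by (intro subspace_sum[OF subspace_orthogonal_comp] subspace_scale[OF subspace_orthogonal_comp]
      subspace_diff[OF subspace_orthogonal_comp]) auto

lemma exists_tilt_into_subspace:
  fixes xp xm :: "'a \<Rightarrow> 'a" and \<gamma> r :: real
  assumes "0 < r" "2 * real (card B) \<le> \<gamma>"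
    and near_p: "\<And>e. e \<in> B \<Longrightarrow> norm (Q (xp e) - (\<gamma> * r) *\<^sub>R e) \<le> r"
    and near_m: "\<And>e. e \<in> B \<Longrightarrow> norm (Q (xm e) + (\<gamma> * r) *\<^sub>R e) \<le> r"
  shows "\<exists>n\<in>V\<^sup>\<bottom>. norm n \<le> card B / \<gamma> \<and> tilted_mean B n xp xm \<in> V"
proof -
  let ?k = "real (card B)"
  let ?L = "tilt_map B (Q \<circ> xp) (Q \<circ> xm)"
  let ?c = "\<Sum>e\<in>B. midpoint (Q (xp e)) (Q (xm e))"
  have near: "norm (?L n - (2 * (\<gamma> * r)) *\<^sub>R n) \<le> 2 * ?k * r * norm n" if "n \<in> V\<^sup>\<bottom>" for n
    using norm_tilt_map_sub_scaleR_le[of "Q \<circ> xp" "\<gamma> * r" r "Q \<circ> xm"] near_p near_m that by simp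
  have c_in: "- ?c \<in> V\<^sup>\<bottom>"
    unfolding midpoint_def using orth_proj_in[OF subspace_orthogonal_comp]
    by (intro subspace_neg[OF subspace_orthogonal_comp] subspace_sum[OF subspace_orthogonal_comp]
        subspace_scale[OF subspace_orthogonal_comp] subspace_add[OF subspace_orthogonal_comp]) auto
  have "\<exists>n\<in>V\<^sup>\<bottom>. ?L n = - ?c"
  proof (rule near_scalar_solvable[OF subspace_orthogonal_comp linear_tilt_map _ near _ _ c_in])
    show "?L ` (V\<^sup>\<bottom>) \<subseteq> V\<^sup>\<bottom>" using tilt_map_orth_proj_in by blast
    show "0 \<le> 2 * ?k * r" "2 * ?k * r < 2 * (\<gamma> * r)"
      using assms(1,2) card_B_pos by simp_all
  qed
  then obtain n where n: "n \<in> V\<^sup>\<bottom>" "?L n = - ?c" by blast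
  have "norm ?c \<le> ?k * r"
    using norm_sum_midpoint_le[of "Q \<circ> xp" "\<gamma> * r" r "Q \<circ> xm"] near_p near_m by simp
  then have "r * ((2 * \<gamma> - 2 * ?k) * norm n) \<le> r * ?k"
    using norm_ge_of_near_scalar[where L = ?L, OF near[OF n(1)]] n(2) assms(1,2)
    by (simp add: algebra_simps)
  then have "(2 * \<gamma> - 2 * ?k) * norm n \<le> ?k"
    using assms(1) by (rule mult_left_le_imp_le)
  moreover have "\<gamma> * norm n \<le> (2 * \<gamma> - 2 * ?k) * norm n"
    using assms(2) by (intro mult_right_mono) auto
  ultimately have "norm n \<le> ?k / \<gamma>"
    using assms(2) card_B_pos by (simp add: field_simps)
  moreover have "tilted_mean B n xp xm \<in> V"
    using n(2) by (simp add: tilted_mean_in_subspace_iff)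
  ultimately show ?thesis using n(1) by blast
qed

lemma tilt_lipschitz:
  fixes xp xm xp' xm' :: "'a \<Rightarrow> 'a" and \<gamma> r :: real
  assumes "0 < r" "2 * real (card B) \<le> \<gamma>"
    and near_p: "\<And>e. e \<in> B \<Longrightarrow> norm (Q (xp e) - (\<gamma> * r) *\<^sub>R e) \<le> r"
    and near_m: "\<And>e. e \<in> B \<Longrightarrow> norm (Q (xm e) + (\<gamma> * r) *\<^sub>R e) \<le> r"
    and "n \<in> V\<^sup>\<bottom>" "n' \<in> V\<^sup>\<bottom>" "norm n' \<le> 1/2"
    and "tilted_mean B n xp xm \<in> V" "tilted_mean B n' xp' xm' \<in> V"
  shows "\<gamma> * r * norm (n - n') \<le> (\<Sum>e\<in>B. norm (xp e - xp' e) + norm (xm e - xm' e))"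
proof -
  let ?k = "real (card B)"
  let ?L = "tilt_map B (Q \<circ> xp) (Q \<circ> xm)" and ?L' = "tilt_map B (Q \<circ> xp') (Q \<circ> xm')"
  let ?c = "\<Sum>e\<in>B. midpoint (Q (xp e)) (Q (xm e))"
    and ?c' = "\<Sum>e\<in>B. midpoint (Q (xp' e)) (Q (xm' e))"
  let ?D = "\<Sum>e\<in>B. norm (xp e - xp' e) + norm (xm e - xm' e)"
  have dp: "norm ((Q \<circ> xp') e - (Q \<circ> xp) e) \<le> norm (xp e - xp' e)"
    and dm: "norm ((Q \<circ> xm') e - (Q \<circ> xm) e) \<le> norm (xm e - xm' e)" for e
    using norm_orth_proj_diff_le[OF subspace_orthogonal_comp] by (metis comp_apply norm_minus_commute)+
  have "?L n + ?c = 0" "?L' n' + ?c' = 0"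
    using assms(8,9) by (simp_all add: tilted_mean_in_subspace_iff)
  then have "?L (n - n') = (?c' - ?c) + (?L' n' - ?L n')"
    by (simp add: linear_diff[OF linear_tilt_map] algebra_simps)
  moreover have "norm (?c' - ?c) \<le> ?D / 2"
    using norm_sum_midpoint_diff_le[OF dp dm] by simp
  moreover have "norm (?L' n' - ?L n') \<le> ?D / 2"
  proof -
    have "norm (?L' n' - ?L n') \<le> norm n' * ?D"
      by (rule norm_tilt_map_diff_le[OF unit_B dp dm])
    also have "\<dots> \<le> 1/2 * ?D"
      using assms(7) by (intro mult_right_mono sum_nonneg) auto
    finally show ?thesis by simp
  qed
  ultimately have "norm (?L (n - n')) \<le> ?D"
    using norm_triangle_ineq[of "?c' - ?c" "?L' n' - ?L n'"] by simp
  moreover have "(2 * (\<gamma> * r) - 2 * ?k * r) * norm (n - n') \<le> norm (?L (n - n'))"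
    using subspace_diff[OF subspace_orthogonal_comp assms(5,6)] assms(1,2) near_p near_m
    by (intro norm_ge_of_near_scalar norm_tilt_map_sub_scaleR_le[of "Q \<circ> xp" "\<gamma> * r" r "Q \<circ> xm"]) auto
  moreover have "\<gamma> * r * norm (n - n') \<le> (2 * (\<gamma> * r) - 2 * ?k * r) * norm (n - n')"
    using assms(1,2) by (intro mult_right_mono) auto
  ultimately show ?thesis by linarith
qed

lemma norm_tilted_mean_step_le:
  fixes xp xm xp' xm' :: "'a \<Rightarrow> 'a" and \<gamma> \<gamma>' r :: real
  assumes "0 < r" "2 * real (card B) \<le> \<gamma>" "0 \<le> \<gamma>'"
    and near_p: "\<And>e. e \<in> B \<Longrightarrow> norm (Q (xp e) - (\<gamma> * r) *\<^sub>R e) \<le> r"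
    and near_m: "\<And>e. e \<in> B \<Longrightarrow> norm (Q (xm e) + (\<gamma> * r) *\<^sub>R e) \<le> r"
    and bounded_p: "\<And>e. e \<in> B \<Longrightarrow> norm (P (xp' e)) \<le> \<gamma>' * r"
    and bounded_m: "\<And>e. e \<in> B \<Longrightarrow> norm (P (xm' e)) \<le> \<gamma>' * r"
    and "n \<in> V\<^sup>\<bottom>" "n' \<in> V\<^sup>\<bottom>" "norm n \<le> card B / \<gamma>" "norm n' \<le> 1/2"
    and "tilted_mean B n xp xm \<in> V" "tilted_mean B n' xp' xm' \<in> V"
  shows "norm (tilted_mean B n xp xm - tilted_mean B n' xp' xm')
    \<le> (1 / (2 * real (card B)) + (1 + 2 * \<gamma>') / \<gamma>) * (\<Sum>e\<in>B. norm (xp e - xp' e) + norm (xm e - xm' e))"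
proof -
  let ?k = "real (card B)"
  let ?D = "\<Sum>e\<in>B. norm (xp e - xp' e) + norm (xm e - xm' e)"
  have "0 < \<gamma>" using assms(2) card_B_pos by linarith
  have in_V: "tilted_mean B n xp xm = tilted_mean B n (P \<circ> xp) (P \<circ> xm)"
    "tilted_mean B n' xp' xm' = tilted_mean B n' (P \<circ> xp') (P \<circ> xm')"
    using orth_proj_id[OF subspace_V assms(12)] orth_proj_id[OF subspace_V assms(13)]
    by (simp_all add: linear_image_tilted_mean[OF linear_orth_proj[OF subspace_V]])
  have "norm (tilted_mean B n xp xm - tilted_mean B n' xp' xm')
      \<le> (1/2 + norm n) / ?k * ?D + (2 * \<gamma>' * r) * norm (n - n')"
    unfolding in_V
  proof (rule norm_tilted_mean_diff_le[OF finite_B B_nonempty unit_B])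
    fix e assume "e \<in> B"
    show "norm ((P \<circ> xp) e - (P \<circ> xp') e) \<le> norm (xp e - xp' e)"
      "norm ((P \<circ> xm) e - (P \<circ> xm') e) \<le> norm (xm e - xm' e)"
      by (simp_all add: norm_orth_proj_diff_le[OF subspace_V])
    show "norm ((P \<circ> xp') e - (P \<circ> xm') e) \<le> 2 * \<gamma>' * r"
      using norm_triangle_ineq4[of "P (xp' e)" "P (xm' e)"] bounded_p[OF \<open>e \<in> B\<close>]
        bounded_m[OF \<open>e \<in> B\<close>] by simp
  qed
  also have "\<dots> \<le> (1 / (2 * ?k) + 1 / \<gamma>) * ?D + 2 * \<gamma>' / \<gamma> * ?D"
  proof (rule add_mono)
    have "norm n / ?k \<le> (?k / \<gamma>) / ?k"
      using assms(10) card_B_pos by (intro divide_right_mono) auto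
    then have "(1/2 + norm n) / ?k \<le> 1 / (2 * ?k) + 1 / \<gamma>"
      using card_B_pos by (simp add: add_divide_distrib)
    then show "(1/2 + norm n) / ?k * ?D \<le> (1 / (2 * ?k) + 1 / \<gamma>) * ?D"
      by (rule mult_right_mono) (simp add: sum_nonneg)
    have "\<gamma> * r * norm (n - n') \<le> ?D"
      by (rule tilt_lipschitz[OF assms(1,2) near_p near_m assms(8,9,11,12,13)])
    then have "2 * \<gamma>' / \<gamma> * (\<gamma> * r * norm (n - n')) \<le> 2 * \<gamma>' / \<gamma> * ?D"
      by (rule mult_left_mono) (use assms(3) \<open>0 < \<gamma>\<close> in simp)
    then show "2 * \<gamma>' * r * norm (n - n') \<le> 2 * \<gamma>' / \<gamma> * ?D"
      using \<open>0 < \<gamma>\<close> by simp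
  qed
  also have "\<dots> = (1 / (2 * ?k) + (1 + 2 * \<gamma>') / \<gamma>) * ?D"
    by (simp add: add_divide_distrib ring_distribs)
  finally show ?thesis .
qed

lemma exists_path_in_subspace_of_pole_paths:
  fixes K :: "nat \<Rightarrow> 'a set" and pp pm :: "nat \<Rightarrow> 'a \<Rightarrow> 'a" and \<gamma> \<gamma>' r :: real
  assumes "0 < r" "2 * real (card B) \<le> \<gamma>" "0 \<le> \<gamma>'"
    and convex: "\<And>t. t \<in> {1..T} \<Longrightarrow> convex (K t)"
    and in_K: "\<And>t e. t \<in> {1..T} \<Longrightarrow> e \<in> B \<Longrightarrow> pp t e \<in> K t \<and> pm t e \<in> K t"
    and bounded: "\<And>t e. t \<in> {1..T} \<Longrightarrow> e \<in> B \<Longrightarrow>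
      norm (P (pp t e)) \<le> \<gamma>' * r \<and> norm (P (pm t e)) \<le> \<gamma>' * r"
    and near: "\<And>t e. t \<in> {1..T} \<Longrightarrow> e \<in> B \<Longrightarrow>
      norm (Q (pp t e) - (\<gamma> * r) *\<^sub>R e) \<le> r \<and> norm (Q (pm t e) + (\<gamma> * r) *\<^sub>R e) \<le> r"
    and short: "\<And>e. e \<in> B \<Longrightarrow> path_length T (\<lambda>t. pp t e) \<le> r \<and> path_length T (\<lambda>t. pm t e) \<le> r"
  shows "\<exists>Y. (\<forall>t\<in>{1..T}. Y t \<in> K t \<inter> V) \<and> path_length T Y \<le> (1 + (2 + 4 * \<gamma>') / \<gamma> * card B) * r"
proof -
  let ?k = "real (card B)"
  have "0 < \<gamma>" using assms(2) card_B_pos by linarith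
  have "\<exists>n\<in>V\<^sup>\<bottom>. norm n \<le> ?k / \<gamma> \<and> tilted_mean B n (pp t) (pm t) \<in> V" if "t \<in> {1..T}" for t
    using exists_tilt_into_subspace[OF assms(1,2)] near[OF that] by blast
  then obtain n where n_perp: "\<And>t. t \<in> {1..T} \<Longrightarrow> n t \<in> V\<^sup>\<bottom>"
    and n_small: "\<And>t. t \<in> {1..T} \<Longrightarrow> norm (n t) \<le> ?k / \<gamma>"
    and Y_in_V: "\<And>t. t \<in> {1..T} \<Longrightarrow> tilted_mean B (n t) (pp t) (pm t) \<in> V"
    by metis
  define Y where "Y t = tilted_mean B (n t) (pp t) (pm t)" for t
  have n_half: "norm (n t) \<le> 1/2" if "t \<in> {1..T}" for t
  proof -
    have "?k / \<gamma> \<le> 1/2" using assms(2) \<open>0 < \<gamma>\<close> by (simp add: field_simps)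
    then show ?thesis using n_small[OF that] by linarith
  qed
  have Y_in_K: "Y t \<in> K t" if "t \<in> {1..T}" for t
    unfolding Y_def
  proof (rule tilted_mean_in_convex[OF convex[OF that] finite_B B_nonempty])
    fix e assume "e \<in> B"
    show "pp t e \<in> K t" "pm t e \<in> K t" using in_K[OF that \<open>e \<in> B\<close>] by simp_all
    show "\<bar>n t \<bullet> e\<bar> \<le> 1/2"
      using Cauchy_Schwarz_ineq2[of "n t" e] unit_B[OF \<open>e \<in> B\<close>] n_half[OF that] by simp
  qed
  let ?c = "1 / (2 * ?k) + (1 + 2 * \<gamma>') / \<gamma>"
  have "path_length T Y \<le> ?c * (2 * ?k * r)"
  proof (rule path_length_le_of_dominated_steps[OF _ _ short])
    show "0 \<le> ?c" using assms(3) \<open>0 < \<gamma>\<close> card_B_pos by simp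
    fix t assume "t \<in> {1..T-1}"
    then have t: "t \<in> {1..T}" "t + 1 \<in> {1..T}" by auto
    show "norm (Y t - Y (t+1))
        \<le> ?c * (\<Sum>e\<in>B. norm (pp t e - pp (t+1) e) + norm (pm t e - pm (t+1) e))"
      unfolding Y_def
      using assms(1-3) near[OF t(1)] bounded[OF t(2)] n_perp[OF t(1)] n_perp[OF t(2)]
        n_small[OF t(1)] n_half[OF t(2)] Y_in_V[OF t(1)] Y_in_V[OF t(2)]
      by (intro norm_tilted_mean_step_le) auto
  qed
  also have "\<dots> = (1 + (2 + 4 * \<gamma>') / \<gamma> * ?k) * r"
    using card_B_pos \<open>0 < \<gamma>\<close> by (simp add: field_simps)
  finally have "path_length T Y \<le> (1 + (2 + 4 * \<gamma>') / \<gamma> * ?k) * r" .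
  moreover have "\<forall>t\<in>{1..T}. Y t \<in> K t \<inter> V"
    using Y_in_K Y_in_V by (simp add: Y_def)
  ultimately show ?thesis by (intro exI[of _ Y] conjI)
qed

lemma exists_path_in_subspace:
  fixes K :: "nat \<Rightarrow> 'a set" and \<gamma> \<gamma>' r :: real
  assumes "0 < r" "2 * real (card B) \<le> \<gamma>" "0 \<le> \<gamma>'"
    and convex: "\<And>t. t \<in> {1..T} \<Longrightarrow> convex (K t)"
    and sphere_covered: "\<And>\<theta>. \<theta> \<in> V\<^sup>\<bottom> \<Longrightarrow> norm \<theta> = \<gamma> * r \<Longrightarrow>
      \<exists>ys. Q (ys T) = \<theta> \<and> (\<forall>t\<in>{1..T}. ys t \<in> K t \<and> norm (P (ys t)) \<le> \<gamma>' * r) \<and> path_length T ys \<le> r"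
  shows "\<exists>Y. (\<forall>t\<in>{1..T}. Y t \<in> K t \<inter> V) \<and> path_length T Y \<le> (1 + (2 + 4 * \<gamma>') / \<gamma> * card B) * r"
proof -
  obtain path where path: "\<And>\<theta>. \<theta> \<in> V\<^sup>\<bottom> \<Longrightarrow> norm \<theta> = \<gamma> * r \<Longrightarrow>
      Q (path \<theta> T) = \<theta> \<and> (\<forall>t\<in>{1..T}. path \<theta> t \<in> K t \<and> norm (P (path \<theta> t)) \<le> \<gamma>' * r)
      \<and> path_length T (path \<theta>) \<le> r"
    using sphere_covered by metis
  have near: "norm (Q (path \<theta> t) - \<theta>) \<le> r" if "\<theta> \<in> V\<^sup>\<bottom>" "norm \<theta> = \<gamma> * r" "t \<in> {1..T}" for \<theta> t
    using norm_orth_proj_diff_le_path_length[OF subspace_orthogonal_comp that(3), of V "path \<theta>"]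
      path[OF that(1,2)] by auto
  have "0 < \<gamma>" using assms(2) card_B_pos by linarith
  have pole: "(\<gamma> * r) *\<^sub>R e \<in> V\<^sup>\<bottom>" "- ((\<gamma> * r) *\<^sub>R e) \<in> V\<^sup>\<bottom>"
    "norm ((\<gamma> * r) *\<^sub>R e) = \<gamma> * r" "norm (- ((\<gamma> * r) *\<^sub>R e)) = \<gamma> * r"
    if "e \<in> B" for e
  proof -
    have "e \<in> V\<^sup>\<bottom>" using that span_B span_superset by blast
    then have "(\<gamma> * r) *\<^sub>R e \<in> V\<^sup>\<bottom>" by (rule subspace_scale[OF subspace_orthogonal_comp])
    then show "(\<gamma> * r) *\<^sub>R e \<in> V\<^sup>\<bottom>" "- ((\<gamma> * r) *\<^sub>R e) \<in> V\<^sup>\<bottom>"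
      "norm ((\<gamma> * r) *\<^sub>R e) = \<gamma> * r" "norm (- ((\<gamma> * r) *\<^sub>R e)) = \<gamma> * r"
      using subspace_neg[OF subspace_orthogonal_comp] unit_B[OF that] assms(1) \<open>0 < \<gamma>\<close> by auto
  qed
  show ?thesis
    by (rule exists_path_in_subspace_of_pole_paths[OF assms(1-3) convex,
          where pp = "\<lambda>t e. path ((\<gamma> * r) *\<^sub>R e) t" and pm = "\<lambda>t e. path (- ((\<gamma> * r) *\<^sub>R e)) t"])
      (use path[OF pole(1,3)] path[OF pole(2,4)] near[OF pole(1,3)] near[OF pole(2,4)] in auto)
qed

end

theorem lemma9:
  fixes k T :: nat and r \<gamma> \<gamma>' :: real
    and K :: "nat \<Rightarrow> 'a::euclidean_space set" and V :: "'a set"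
  assumes "k \<ge> 1" and "k \<le> DIM('a)"
    and "r > 0" and "\<gamma>' \<ge> 0" and "\<gamma> \<ge> 12 * real k"
    and "\<And>t. t \<in> {1..T} \<Longrightarrow> convex (K t)"
    and "subspace V" and "dim V = DIM('a) - k"
    and "{\<theta> \<in> orthogonal_comp V. norm \<theta> = \<gamma> * r} \<subseteq>
         orth_proj (orthogonal_comp V) `
           {y \<in> {z. norm (orth_proj V z) \<le> \<gamma>' * r}.
              \<exists>ys :: nat \<Rightarrow> 'a. ys T = y
                 \<and> (\<forall>t\<in>{1..T}. ys t \<in> K t \<inter> {z. norm (orth_proj V z) \<le> \<gamma>' * r})
                 \<and> (\<Sum>t=1..T-1. norm (ys t - ys (t+1))) \<le> r}"
  shows "\<exists>Y :: nat \<Rightarrow> 'a. (\<forall>t\<in>{1..T}. Y t \<in> K t \<inter> V)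
           \<and> (\<Sum>t=1..T-1. norm (Y t - Y (t+1))) \<le> (1 + (2 + 4 * \<gamma>') / \<gamma> * real k) * r"
proof -
  obtain B where B: "B \<subseteq> V\<^sup>\<bottom>" "pairwise orthogonal B" "\<And>e. e \<in> B \<Longrightarrow> norm e = 1"
    "independent B" "card B = dim (V\<^sup>\<bottom>)" "span B = V\<^sup>\<bottom>"
    using orthonormal_basis_subspace[OF subspace_orthogonal_comp] by metis
  have "finite B" using B(4) by (simp add: indep_card_eq_dim_span)
  have "card B = k" using B(5) dim_orthogonal_comp[OF assms(7)] assms(2,8) by simp
  then have "B \<noteq> {}" using assms(1) by auto
  interpret orthonormal_complement_basis V B
    by unfold_locales (simp_all add: assms(7) \<open>finite B\<close> \<open>B \<noteq> {}\<close> B)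
  have sphere_covered: "\<exists>ys. orth_proj (V\<^sup>\<bottom>) (ys T) = \<theta>
      \<and> (\<forall>t\<in>{1..T}. ys t \<in> K t \<and> norm (orth_proj V (ys t)) \<le> \<gamma>' * r) \<and> path_length T ys \<le> r"
    if "\<theta> \<in> V\<^sup>\<bottom>" "norm \<theta> = \<gamma> * r" for \<theta>
  proof -
    have "\<theta> \<in> {\<theta> \<in> orthogonal_comp V. norm \<theta> = \<gamma> * r}" using that by simp
    with assms(9) obtain y ys where "\<theta> = orth_proj (V\<^sup>\<bottom>) y" "ys T = y"
      "\<forall>t\<in>{1..T}. ys t \<in> K t \<inter> {z. norm (orth_proj V z) \<le> \<gamma>' * r}"
      "(\<Sum>t=1..T-1. norm (ys t - ys (t+1))) \<le> r"
      by blast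
    then show ?thesis unfolding path_length_def by auto
  qed
  have "2 * real (card B) \<le> \<gamma>" using assms(5) \<open>card B = k\<close> by simp
  then have "\<exists>Y. (\<forall>t\<in>{1..T}. Y t \<in> K t \<inter> V)
      \<and> path_length T Y \<le> (1 + (2 + 4 * \<gamma>') / \<gamma> * card B) * r"
    by (rule exists_path_in_subspace[where T = T and K = K, OF assms(3) _ assms(4,6) sphere_covered])
  then show ?thesis using \<open>card B = k\<close> unfolding path_length_def by simp
qed

end
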